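(* Let $G=(V,E)$ be an edge-weighted graph and consider a non-contractive embedding of its shortest-path metric $(V,d_V)$ into an HST $T$. Then for every $u,v\in V$, the set of edges $e=(x,y)\in E$ with $d_T(e)\ge d_T(u,v)$ is a cut-set for $u$ and $v$, i.e. every path in $G$ from $u$ to $v$ contains such an edge.
   Context: Here $d_T(e)$ for $e=(x,y)$ denotes the distance in $T$ between the images of $x$ and $y$, and $d_T(u,v)$ the distance between the images of $u,v$. An HST ($\mu$-HST, $\mu\ge1$... in the paper $\mu>1$) metric is the metric on the leaves of a rooted tree where each node $w$ has a label $\Delta(w)\ge0$, $\Delta(w)=0$ iff $w$ is a leaf, and $\Delta(w)\le\Delta(w')/\mu$ whenever $w$ is a child of $w'$; the distance between leaves is the label of their least common ancestor. The embedding maps points of $V$ to leaves and is non-contractive: $d_T(x,y)\ge d_V(x,y)$. *)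

theory Defs
  imports Complex_Main "HOL-Library.Sublist"
begin

definition weighted_graph :: "'a set \<Rightarrow> ('a \<times> 'a) set \<Rightarrow> ('a \<times> 'a \<Rightarrow> real) \<Rightarrow> bool" where
  "weighted_graph V E w \<longleftrightarrow> finite V \<and> E \<subseteq> V \<times> V \<and> sym E \<and>
     (\<forall>(x,y)\<in>E. w (x,y) > 0 \<and> w (x,y) = w (y,x))"

definition edges_of :: "'a list \<Rightarrow> ('a \<times> 'a) list" where
  "edges_of xs = zip xs (tl xs)"

definition is_path :: "('a \<times> 'a) set \<Rightarrow> 'a list \<Rightarrow> 'a \<Rightarrow> 'a \<Rightarrow> bool" where
  "is_path E xs u v \<longleftrightarrow> xs \<noteq> [] \<and> hd xs = u \<and> last xs = v \<and> set (edges_of xs) \<subseteq> E"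

definition path_weight :: "('a \<times> 'a \<Rightarrow> real) \<Rightarrow> 'a list \<Rightarrow> real" where
  "path_weight w xs = sum_list (map w (edges_of xs))"

definition connected_graph :: "'a set \<Rightarrow> ('a \<times> 'a) set \<Rightarrow> bool" where
  "connected_graph V E \<longleftrightarrow> (\<forall>u\<in>V. \<forall>v\<in>V. \<exists>xs. is_path E xs u v)"

definition sp_dist :: "('a \<times> 'a) set \<Rightarrow> ('a \<times> 'a \<Rightarrow> real) \<Rightarrow> 'a \<Rightarrow> 'a \<Rightarrow> real" where
  "sp_dist E w u v = Inf {path_weight w xs | xs. is_path E xs u v}"

text \<open>A finite rooted tree, nodes represented by their address (list of child
  indices) from the root []: a finite, nonempty, prefix-closed set of lists.\<close>
definition rooted_tree :: "'n list set \<Rightarrow> bool" where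
  "rooted_tree T \<longleftrightarrow> finite T \<and> [] \<in> T \<and> (\<forall>w\<in>T. \<forall>p. prefix p w \<longrightarrow> p \<in> T)"

definition tree_leaf :: "'n list set \<Rightarrow> 'n list \<Rightarrow> bool" where
  "tree_leaf T w \<longleftrightarrow> w \<in> T \<and> \<not> (\<exists>i. w @ [i] \<in> T)"

definition is_HST :: "real \<Rightarrow> 'n list set \<Rightarrow> ('n list \<Rightarrow> real) \<Rightarrow> bool" where
  "is_HST \<mu> T \<Delta> \<longleftrightarrow> \<mu> > 1 \<and> rooted_tree T \<and>
     (\<forall>w\<in>T. \<Delta> w \<ge> 0 \<and> (\<Delta> w = 0 \<longleftrightarrow> tree_leaf T w)) \<and>
     (\<forall>w i. w @ [i] \<in> T \<longrightarrow> \<Delta> (w @ [i]) \<le> \<Delta> w / \<mu>)"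

text \<open>HST distance between leaves: label of the least common ancestor.\<close>
definition hst_dist :: "('n list \<Rightarrow> real) \<Rightarrow> 'n list \<Rightarrow> 'n list \<Rightarrow> real" where
  "hst_dist \<Delta> a b = \<Delta> (longest_common_prefix a b)"

definition noncontractive_embedding ::
  "'a set \<Rightarrow> ('a \<Rightarrow> 'a \<Rightarrow> real) \<Rightarrow> 'n list set \<Rightarrow> ('n list \<Rightarrow> real) \<Rightarrow> ('a \<Rightarrow> 'n list) \<Rightarrow> bool" where
  "noncontractive_embedding V d T \<Delta> f \<longleftrightarrow>
     (\<forall>x\<in>V. tree_leaf T (f x)) \<and> (\<forall>x\<in>V. \<forall>y\<in>V. hst_dist \<Delta> (f x) (f y) \<ge> d x y)"

end

theory Submission
  imports Defs
begin

text \<open>The HST distance is an ultrametric: labels decrease along root-to-leaf paths, and the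
  least common ancestor of \<open>a, c\<close> lies below that of \<open>a, b\<close> or that of \<open>b, c\<close>.
  Along a walk from \<open>u\<close> to \<open>v\<close> the ultrametric inequality, applied repeatedly, bounds
  \<open>d\<^sub>T(u, v)\<close> by the largest \<open>d\<^sub>T\<close> of a traversed edge. Neither the weights nor
  non-contractivity play a role: only that the embedding lands in \<open>T\<close>.\<close>

lemma HST_label_child_le:
  assumes H: "is_HST \<mu> T \<Delta>" and child: "w @ [i] \<in> T"
  shows "\<Delta> (w @ [i]) \<le> \<Delta> w"
proof -
  have "w \<in> T" using H child by (auto simp: is_HST_def rooted_tree_def)
  then have "\<Delta> w \<ge> 0" using H by (simp add: is_HST_def)
  moreover have "\<mu> > 1" and "\<Delta> (w @ [i]) \<le> \<Delta> w / \<mu>" using H child by (auto simp: is_HST_def)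
  ultimately have "\<Delta> w / \<mu> \<le> \<Delta> w" by (simp add: divide_le_eq mult_le_cancel_left1)
  then show ?thesis using \<open>\<Delta> (w @ [i]) \<le> \<Delta> w / \<mu>\<close> by linarith
qed

lemma HST_label_antimono:
  assumes H: "is_HST \<mu> T \<Delta>" and "prefix p q" and "q \<in> T"
  shows "\<Delta> q \<le> \<Delta> p"
proof -
  obtain r where "q = p @ r" using \<open>prefix p q\<close> by (auto simp: prefix_def)
  moreover have "p @ r \<in> T \<Longrightarrow> \<Delta> (p @ r) \<le> \<Delta> p"
  proof (induction r rule: rev_induct)
    case (snoc i r)
    have "p @ r \<in> T" using H snoc.prems by (auto simp: is_HST_def rooted_tree_def)
    then show ?case
      using snoc HST_label_child_le[OF H, of "p @ r" i] by simp
  qed simp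
  ultimately show ?thesis using \<open>q \<in> T\<close> by blast
qed

lemma hst_dist_ultrametric:
  assumes H: "is_HST \<mu> T \<Delta>" and "a \<in> T"
  shows "hst_dist \<Delta> a c \<le> max (hst_dist \<Delta> a b) (hst_dist \<Delta> b c)"
proof -
  let ?ab = "longest_common_prefix a b" and ?bc = "longest_common_prefix b c"
    and ?ac = "longest_common_prefix a c"
  have ac_in_T: "?ac \<in> T"
    using H \<open>a \<in> T\<close> longest_common_prefix_prefix1 by (auto simp: is_HST_def rooted_tree_def)
  have "prefix ?ab ?bc \<or> prefix ?bc ?ab"
    by (rule prefix_same_cases[OF longest_common_prefix_prefix2 longest_common_prefix_prefix1])
  then have "prefix ?ab ?ac \<or> prefix ?bc ?ac"
    by (meson longest_common_prefix_max_prefix longest_common_prefix_prefix1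
        longest_common_prefix_prefix2 prefix_order.trans)
  then show ?thesis
    using HST_label_antimono[OF H _ ac_in_T] by (fastforce simp: hst_dist_def)
qed

lemma edges_of_Cons_Cons: "edges_of (a # b # xs) = (a, b) # edges_of (b # xs)"
  by (simp add: edges_of_def)

lemma edges_of_eq_Nil_iff: "edges_of xs = [] \<longleftrightarrow> length xs \<le> 1"
  by (cases xs) (auto simp: edges_of_def)

lemma set_subset_edges_of:
  "xs \<noteq> [] \<Longrightarrow> set xs \<subseteq> insert (last xs) (fst ` set (edges_of xs))"
  by (induction xs rule: induct_list012) (auto simp: edges_of_Cons_Cons edges_of_def)

lemma is_path_vertices:
  assumes "is_path E xs u v" and "E \<subseteq> V \<times> V" and "v \<in> V"
  shows "set xs \<subseteq> V"
  using assms set_subset_edges_of[of xs] by (fastforce simp: is_path_def)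

lemma ultrametric_walk_edge:
  fixes D :: "'a \<Rightarrow> 'a \<Rightarrow> real"
  assumes ultra: "\<And>a b c. a \<in> S \<Longrightarrow> D a c \<le> max (D a b) (D b c)"
    and "set xs \<subseteq> S" and "edges_of xs \<noteq> []"
  shows "\<exists>(x, y) \<in> set (edges_of xs). D (hd xs) (last xs) \<le> D x y"
  using assms(2,3)
proof (induction xs rule: induct_list012)
  case (3 a b rest)
  show ?case
  proof (cases rest)
    case Nil
    then show ?thesis by (simp add: edges_of_Cons_Cons)
  next
    case (Cons c r)
    with 3 obtain x y where xy: "(x, y) \<in> set (edges_of (b # rest))" "D b (last (b # rest)) \<le> D x y"
      by (auto simp: edges_of_Cons_Cons)
    have "D a (last (b # rest)) \<le> max (D a b) (D b (last (b # rest)))"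
      using ultra 3 by simp
    then have "D a (last (b # rest)) \<le> D a b \<or> D a (last (b # rest)) \<le> D x y"
      using xy(2) by linarith
    then show ?thesis using xy(1) by (auto simp: edges_of_Cons_Cons)
  qed
qed (auto simp: edges_of_def)

theorem proposition5p7:
  fixes V :: "'a set" and E :: "('a \<times> 'a) set" and w :: "'a \<times> 'a \<Rightarrow> real"
    and \<mu> :: real and T :: "'n list set" and \<Delta> :: "'n list \<Rightarrow> real" and f :: "'a \<Rightarrow> 'n list"
  assumes G: "weighted_graph V E w" and conn: "connected_graph V E"
    and H: "is_HST \<mu> T \<Delta>"
    and emb: "noncontractive_embedding V (sp_dist E w) T \<Delta> f"
    and u: "u \<in> V" and v: "v \<in> V" and uv: "u \<noteq> v"
  shows "\<forall>xs. is_path E xs u v \<longrightarrow>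
           (\<exists>(x, y) \<in> set (edges_of xs). (x, y) \<in> E \<and>
               hst_dist \<Delta> (f x) (f y) \<ge> hst_dist \<Delta> (f u) (f v))"
proof (intro allI impI)
  fix xs assume path: "is_path E xs u v"
  have "set xs \<subseteq> V"
    using is_path_vertices[OF path _ v] G by (simp add: weighted_graph_def)
  moreover have "edges_of xs \<noteq> []"
    using path uv by (auto simp: is_path_def edges_of_eq_Nil_iff le_Suc_eq length_Suc_conv)
  moreover have "\<And>a b c. a \<in> V \<Longrightarrow> hst_dist \<Delta> (f a) (f c)
      \<le> max (hst_dist \<Delta> (f a) (f b)) (hst_dist \<Delta> (f b) (f c))"
    using emb hst_dist_ultrametric[OF H]
    by (auto simp: noncontractive_embedding_def tree_leaf_def)
  ultimately obtain x y where "(x, y) \<in> set (edges_of xs)"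
      "hst_dist \<Delta> (f (hd xs)) (f (last xs)) \<le> hst_dist \<Delta> (f x) (f y)"
    using ultrametric_walk_edge[of V "\<lambda>a b. hst_dist \<Delta> (f a) (f b)"] by blast
  then show "\<exists>(x, y) \<in> set (edges_of xs). (x, y) \<in> E \<and>
      hst_dist \<Delta> (f x) (f y) \<ge> hst_dist \<Delta> (f u) (f v)"
    using path by (auto simp: is_path_def)
qed

end
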